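(* Let $K$ be a compact Hausdorff space, and let $f,g$ be two non-zero elements of $B_{C(K)}$. Then $B_{C(K)}\subset \overline B(f,1)\cup\overline B(g,1)$ if and only if there exist an isolated point $u$ of $K$ and real numbers $c,d$ such that $f=c\mathds{1}_{\{u\}}$, $g=d\mathds{1}_{\{u\}}$ and $cd<0$.
   Context: $C(K)$ is the Banach space of real-valued continuous functions on $K$ with the supremum norm, $B_{C(K)}$ its closed unit ball, and $\overline B(h,r)$ denotes the closed ball in $C(K)$ with center $h$ and radius $r$. $\mathds{1}_{\{u\}}$ is the indicator function of $\{u\}$. *)

theory Defs
  imports "HOL-Analysis.Analysis"
begin

end

theory Submission
  imports Defs
begin

(* If f x and g y are nonzero, a function h of the unit ball with h x = -sgn (f x) and
   h y = -sgn (g y) is at distance > 1 from both f and g, so the covering forbids it.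
   Constant h show that f and g never share a sign at a point; for x ~= y Urysohn's lemma
   produces such an h, so f and g are both supported on a single common point u, and
   u is isolated because {f ~= 0} = {u} is open.  Conversely, for f = c 1_{u}, g = d 1_{u}
   with c d < 0, a function h of the unit ball is within 1 of f and g off u, and h u lies
   within 1 of whichever of c, d has its sign. *)

lemma Hausdorff_space_euclidean_t2: "Hausdorff_space (euclidean :: 'a::t2_space topology)"
  unfolding Hausdorff_space_def by (metis disjnt_def open_openin separation_t2)

lemma normal_space_compact_t2:
  assumes "compact (UNIV :: 'a::t2_space set)"
  shows "normal_space (euclidean :: 'a topology)"
  using assms Hausdorff_space_euclidean_t2
  by (intro compact_Hausdorff_or_regular_imp_normal_space) (auto simp: compact_space_def)

lemma mem_cball_bcontfun_iff:
  fixes f h :: "'a::topological_space \<Rightarrow>\<^sub>C 'b::metric_space"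
  shows "h \<in> cball f r \<longleftrightarrow> (\<forall>x. dist (f x) (h x) \<le> r)"
  by (meson dist_bound dist_bounded mem_cball order_trans)

lemma mem_cball_zero_bcontfun_iff:
  fixes h :: "'a::topological_space \<Rightarrow>\<^sub>C 'b::real_normed_vector"
  shows "h \<in> cball 0 r \<longleftrightarrow> (\<forall>x. norm (h x) \<le> r)"
  by (meson mem_cball_0 norm_bound norm_bounded order_trans)

lemma bcontfun_in_unit_ball_interpolating:
  fixes x y :: "'a::t2_space"
  assumes "compact (UNIV :: 'a set)" "x \<noteq> y" "\<bar>a\<bar> \<le> 1" "\<bar>b\<bar> \<le> 1"
  obtains h :: "'a \<Rightarrow>\<^sub>C real" where "h \<in> cball 0 1" "h x = a" "h y = b"
proof -
  obtain \<phi> :: "'a \<Rightarrow> real" where \<phi>: "continuous_map euclidean (top_of_set {0..1}) \<phi>"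
      "\<phi> ` {x} \<subseteq> {0}" "\<phi> ` {y} \<subseteq> {1}"
    using Urysohn_lemma[OF normal_space_compact_t2[OF assms(1)], of "{x}" "{y}" 0 1] assms(2)
    by auto
  have \<phi>_cont: "continuous_on UNIV \<phi>" and \<phi>_range: "0 \<le> \<phi> z" "\<phi> z \<le> 1" for z
    using \<phi>(1) by (auto simp: continuous_map_in_subtopology)
  define h where "h z = (1 - \<phi> z) * a + \<phi> z * b" for z
  have h_bound: "\<bar>h z\<bar> \<le> 1" for z
  proof -
    have "\<bar>h z\<bar> \<le> (1 - \<phi> z) * \<bar>a\<bar> + \<phi> z * \<bar>b\<bar>"
      unfolding h_def using \<phi>_range[of z] abs_triangle_ineq[of "(1 - \<phi> z) * a" "\<phi> z * b"]
      by (simp add: abs_mult)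
    also have "\<dots> \<le> (1 - \<phi> z) * 1 + \<phi> z * 1"
      using assms(3,4) \<phi>_range[of z] by (intro add_mono mult_left_mono) auto
    finally show ?thesis by simp
  qed
  have "h \<in> bcontfun"
    using \<phi>_cont h_bound unfolding h_def
    by (intro bcontfun_normI[where b=1]) (auto intro!: continuous_intros)
  then have h_apply: "apply_bcontfun (Bcontfun h) = h"
    by (rule Bcontfun_inverse)
  show ?thesis
  proof (rule that)
    show "Bcontfun h \<in> cball 0 1"
      unfolding mem_cball_zero_bcontfun_iff h_apply using h_bound by simp
    show "Bcontfun h x = a" "Bcontfun h y = b"
      using \<phi>(2,3) by (simp_all add: h_apply h_def)
  qed
qed

lemma not_mem_cball_if_opposite_sign:
  fixes f h :: "'a::topological_space \<Rightarrow>\<^sub>C real"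
  assumes "f x \<noteq> 0" "h x = - sgn (f x)"
  shows "h \<notin> cball f 1"
  unfolding mem_cball_bcontfun_iff using assms
  by (auto simp: dist_real_def sgn_if not_le intro!: exI[of _ x])

lemma unit_ball_cover_excludes_doubly_opposite:
  fixes f g h :: "'a::topological_space \<Rightarrow>\<^sub>C real"
  assumes "cball 0 1 \<subseteq> cball f 1 \<union> cball g 1" "h \<in> cball 0 1"
    and "f x \<noteq> 0" "h x = - sgn (f x)"
    and "g y \<noteq> 0" "h y = - sgn (g y)"
  shows False
  using assms not_mem_cball_if_opposite_sign[of f x h] not_mem_cball_if_opposite_sign[of g y h]
  by blast

lemma unit_ball_cover_imp_opposite_signs:
  fixes f g :: "'a::topological_space \<Rightarrow>\<^sub>C real"
  assumes "cball 0 1 \<subseteq> cball f 1 \<union> cball g 1"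
  shows "f x * g x \<le> 0"
proof (rule ccontr)
  assume "\<not> f x * g x \<le> 0"
  then have "f x \<noteq> 0" "g x \<noteq> 0" "sgn (g x) = sgn (f x)"
    by (auto simp: sgn_if zero_less_mult_iff not_le)
  moreover have "const_bcontfun (- sgn (f x)) \<in> cball 0 1"
    unfolding mem_cball_zero_bcontfun_iff by (simp add: sgn_if)
  ultimately show False
    using unit_ball_cover_excludes_doubly_opposite[OF assms, of "const_bcontfun (- sgn (f x))" x x]
    by simp
qed

lemma unit_ball_cover_imp_common_support:
  fixes f g :: "'a::t2_space \<Rightarrow>\<^sub>C real"
  assumes "compact (UNIV :: 'a set)" "cball 0 1 \<subseteq> cball f 1 \<union> cball g 1"
    and "f x \<noteq> 0" "g y \<noteq> 0"
  shows "x = y"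
proof (rule ccontr)
  assume "x \<noteq> y"
  moreover have "\<bar>- sgn (f x)\<bar> \<le> 1" "\<bar>- sgn (g y)\<bar> \<le> 1"
    by (simp_all add: sgn_if)
  ultimately obtain h :: "'a \<Rightarrow>\<^sub>C real"
    where "h \<in> cball 0 1" "h x = - sgn (f x)" "h y = - sgn (g y)"
    by (rule bcontfun_in_unit_ball_interpolating[OF assms(1)])
  then show False
    using unit_ball_cover_excludes_doubly_opposite[OF assms(2)] assms(3,4) by blast
qed

lemma isolated_in_UNIV_if_support_singleton:
  fixes f :: "'a::topological_space \<Rightarrow>\<^sub>C 'b::real_normed_vector"
  assumes "{x. f x \<noteq> 0} = {u}"
  shows "u isolated_in UNIV"
proof (rule isolated_inI)
  show "open {u}"
    unfolding assms[symmetric]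
    by (intro open_Collect_neq continuous_on_apply_bcontfun continuous_on_const)
qed auto

lemma abs_diff_le_one_if_opposite_signs:
  fixes c d t :: real
  assumes "\<bar>c\<bar> \<le> 1" "\<bar>d\<bar> \<le> 1" "c * d < 0" "\<bar>t\<bar> \<le> 1"
  shows "\<bar>c - t\<bar> \<le> 1 \<or> \<bar>d - t\<bar> \<le> 1"
  using assms by (smt (verit) mult_nonneg_nonneg mult_nonpos_nonpos)

lemma unit_ball_cover_by_opposite_point_masses:
  fixes f g :: "'a::topological_space \<Rightarrow>\<^sub>C real"
  assumes "\<And>x. f x = c * indicator {u} x" "\<And>x. g x = d * indicator {u} x"
    and "\<bar>c\<bar> \<le> 1" "\<bar>d\<bar> \<le> 1" "c * d < 0"
  shows "cball 0 1 \<subseteq> cball f 1 \<union> cball g 1"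
proof
  fix h :: "'a \<Rightarrow>\<^sub>C real"
  assume "h \<in> cball 0 1"
  then have h_bound: "\<bar>h x\<bar> \<le> 1" for x
    unfolding mem_cball_zero_bcontfun_iff by simp
  then have "\<bar>c - h u\<bar> \<le> 1 \<or> \<bar>d - h u\<bar> \<le> 1"
    using abs_diff_le_one_if_opposite_signs assms(3-5) by blast
  then show "h \<in> cball f 1 \<union> cball g 1"
    unfolding Un_iff mem_cball_bcontfun_iff dist_real_def assms(1,2)
    using h_bound by (auto simp: indicator_def)
qed

theorem lemma2p3:
  fixes f g :: "('a::t2_space) \<Rightarrow>\<^sub>C real"
  assumes "compact (UNIV :: 'a set)"
    and "f \<in> cball 0 1" and "g \<in> cball 0 1"
    and "f \<noteq> 0" and "g \<noteq> 0"
  shows "cball 0 1 \<subseteq> cball f 1 \<union> cball g 1 \<longleftrightarrow>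
    (\<exists>u c d. u isolated_in (UNIV :: 'a set) \<and>
       (\<forall>x. apply_bcontfun f x = c * indicator {u} x) \<and>
       (\<forall>x. apply_bcontfun g x = d * indicator {u} x) \<and> c * d < 0)"
proof
  assume cover: "cball 0 1 \<subseteq> cball f 1 \<union> cball g 1"
  obtain u where "f u \<noteq> 0"
    using assms(4) by (metis bcontfun_eqI zero_bcontfun.rep_eq)
  obtain v where "g v \<noteq> 0"
    using assms(5) by (metis bcontfun_eqI zero_bcontfun.rep_eq)
  have f_support: "{x. f x \<noteq> 0} = {u}" and g_support: "{x. g x \<noteq> 0} = {u}"
    using unit_ball_cover_imp_common_support[OF assms(1) cover] \<open>f u \<noteq> 0\<close> \<open>g v \<noteq> 0\<close>
    by blast+
  have "g u \<noteq> 0"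
    using g_support by blast
  then have "f u * g u < 0"
    using unit_ball_cover_imp_opposite_signs[OF cover, of u] \<open>f u \<noteq> 0\<close>
    by (simp add: order_le_less)
  moreover have "f x = f u * indicator {u} x" "g x = g u * indicator {u} x" for x
    using f_support g_support by (auto simp: indicator_def)
  ultimately show "\<exists>u c d. u isolated_in UNIV \<and> (\<forall>x. f x = c * indicator {u} x) \<and>
      (\<forall>x. g x = d * indicator {u} x) \<and> c * d < 0"
    using isolated_in_UNIV_if_support_singleton[OF f_support] by blast
next
  assume "\<exists>u c d. u isolated_in UNIV \<and> (\<forall>x. f x = c * indicator {u} x) \<and>
      (\<forall>x. g x = d * indicator {u} x) \<and> c * d < 0"
  then obtain u c d where f_eq: "\<And>x. f x = c * indicator {u} x"
      and g_eq: "\<And>x. g x = d * indicator {u} x" and "c * d < 0"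
    by blast
  have "\<bar>c\<bar> \<le> 1" "\<bar>d\<bar> \<le> 1"
    using assms(2,3) f_eq[of u] g_eq[of u] unfolding mem_cball_zero_bcontfun_iff by auto
  from f_eq g_eq this \<open>c * d < 0\<close> show "cball 0 1 \<subseteq> cball f 1 \<union> cball g 1"
    by (rule unit_ball_cover_by_opposite_point_masses)
qed

end
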